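(* Let $\varrho,\sigma$ be density operators on a finite-dimensional Hilbert space and $\alpha\in(0,1)$ be such that (1) $\overline{D}_\alpha^{\mathrm{test}}(\varrho\|\sigma)<\overline{D}_\alpha^{\mathrm{meas}}(\varrho\|\sigma)$, and (2) $\frac1nD_\alpha^{\mathrm{test}}(\varrho^{\otimes n}\|\sigma^{\otimes n})<\overline{D}_\alpha^{\mathrm{meas}}(\varrho\|\sigma)$ for every $n\in\mathbb N$. Then $\hat D_\alpha^{\mathrm{test}}(\varrho\|\sigma)<\overline{D}_\alpha^{\mathrm{meas}}(\varrho\|\sigma)$.
   Context: For probability vectors $p,q$ and $\alpha\in(0,1)$, $D_\alpha(p\|q)=\frac{1}{\alpha-1}\log\sum_xp(x)^\alpha q(x)^{1-\alpha}$. For a finite-outcome POVM $M$, $\mathcal M(\varrho):=(\operatorname{Tr}M_x\varrho)_x$; $D_\alpha^{\mathrm{meas}}(\varrho\|\sigma):=\sup_MD_\alpha(\mathcal M(\varrho)\|\mathcal M(\sigma))$ and $\overline{D}_\alpha^{\mathrm{meas}}:=\lim_n\frac1nD_\alpha^{\mathrm{meas}}(\varrho^{\otimes n}\|\sigma^{\otimes n})$. A test is an operator $0\le T\le I$; $\mathcal T(X):=(\operatorname{Tr}XT,\operatorname{Tr}X(I-T))$; $D_\alpha^{\mathrm{test}}(\varrho\|\sigma):=\max_{0\le T\le I}D_\alpha(\mathcal T(\varrho)\|\mathcal T(\sigma))$; $\overline{D}_\alpha^{\mathrm{test}}:=\limsup_n\frac1nD_\alpha^{\mathrm{test}}(\varrho^{\otimes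 n}\|\sigma^{\otimes n})$; $\hat D_\alpha^{\mathrm{test}}:=\sup_n\frac1nD_\alpha^{\mathrm{test}}(\varrho^{\otimes n}\|\sigma^{\otimes n})$. *)

theory Defs
  imports "Jordan_Normal_Form.Matrix" "HOL-Library.Extended_Real" "HOL-Library.Liminf_Limsup"
begin

definition mtrace :: "complex mat \<Rightarrow> complex" where
  "mtrace A = (\<Sum>i<dim_row A. A $$ (i,i))"

definition psd :: "nat \<Rightarrow> complex mat \<Rightarrow> bool" where
  "psd d A \<longleftrightarrow> A \<in> carrier_mat d d \<and>
     (\<forall>v \<in> carrier_vec d. let z = (\<Sum>i<d. cnj (v $ i) * (A *\<^sub>v v) $ i) in Im z = 0 \<and> 0 \<le> Re z)"

definition density :: "nat \<Rightarrow> complex mat \<Rightarrow> bool" where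
  "density d \<rho> \<longleftrightarrow> psd d \<rho> \<and> mtrace \<rho> = 1"

definition kron :: "complex mat \<Rightarrow> complex mat \<Rightarrow> complex mat" where
  "kron A B = mat (dim_row A * dim_row B) (dim_col A * dim_col B)
     (\<lambda>(i,j). A $$ (i div dim_row B, j div dim_col B) * B $$ (i mod dim_row B, j mod dim_col B))"

primrec tpow :: "complex mat \<Rightarrow> nat \<Rightarrow> complex mat" where
  "tpow A 0 = 1\<^sub>m 1"
| "tpow A (Suc n) = kron (tpow A n) A"

definition renyi :: "real \<Rightarrow> real list \<Rightarrow> real list \<Rightarrow> ereal" where
  "renyi \<alpha> p q =
     (let s = (\<Sum>x<length p. (p ! x) powr \<alpha> * (q ! x) powr (1 - \<alpha>))
      in if s = 0 then \<infinity> else ereal (ln s / (\<alpha> - 1)))"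

definition povm :: "nat \<Rightarrow> complex mat list \<Rightarrow> bool" where
  "povm d Ms \<longleftrightarrow> (\<forall>M \<in> set Ms. psd d M) \<and> foldr (+) Ms (0\<^sub>m d d) = 1\<^sub>m d"

definition outcome :: "complex mat list \<Rightarrow> complex mat \<Rightarrow> real list" where
  "outcome Ms \<rho> = map (\<lambda>M. Re (mtrace (M * \<rho>))) Ms"

definition D_meas :: "nat \<Rightarrow> real \<Rightarrow> complex mat \<Rightarrow> complex mat \<Rightarrow> ereal" where
  "D_meas d \<alpha> \<rho> \<sigma> = (SUP Ms \<in> {Ms. povm d Ms}. renyi \<alpha> (outcome Ms \<rho>) (outcome Ms \<sigma>))"

definition is_test :: "nat \<Rightarrow> complex mat \<Rightarrow> bool" where
  "is_test d T \<longleftrightarrow> psd d T \<and> psd d (1\<^sub>m d - T)"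

definition D_test :: "nat \<Rightarrow> real \<Rightarrow> complex mat \<Rightarrow> complex mat \<Rightarrow> ereal" where
  "D_test d \<alpha> \<rho> \<sigma> = (SUP T \<in> {T. is_test d T}.
      renyi \<alpha> [Re (mtrace (\<rho> * T)), Re (mtrace (\<rho> * (1\<^sub>m d - T)))]
              [Re (mtrace (\<sigma> * T)), Re (mtrace (\<sigma> * (1\<^sub>m d - T)))])"

definition D_meas_bar :: "nat \<Rightarrow> real \<Rightarrow> complex mat \<Rightarrow> complex mat \<Rightarrow> ereal" where
  "D_meas_bar d \<alpha> \<rho> \<sigma> = lim (\<lambda>n. D_meas (d ^ n) \<alpha> (tpow \<rho> n) (tpow \<sigma> n) / ereal (real n))"

definition D_test_bar :: "nat \<Rightarrow> real \<Rightarrow> complex mat \<Rightarrow> complex mat \<Rightarrow> ereal" where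
  "D_test_bar d \<alpha> \<rho> \<sigma> = limsup (\<lambda>n. D_test (d ^ n) \<alpha> (tpow \<rho> n) (tpow \<sigma> n) / ereal (real n))"

definition D_test_hat :: "nat \<Rightarrow> real \<Rightarrow> complex mat \<Rightarrow> complex mat \<Rightarrow> ereal" where
  "D_test_hat d \<alpha> \<rho> \<sigma> = (SUP n \<in> {1..}. D_test (d ^ n) \<alpha> (tpow \<rho> n) (tpow \<sigma> n) / ereal (real n))"

end

theory Submission
  imports Defs
begin

text \<open>Only the order structure of the extended reals matters here. If the limsup of a sequence lies below \<open>L\<close>, then some tail is
  bounded by a constant \<open>c < L\<close>; the finitely many terms before that tail are each below \<open>L\<close>,
  so the supremum is at most the maximum of finitely many values below \<open>L\<close>.\<close>

lemma Limsup_less_imp_eventually_le: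
  fixes f :: "'b \<Rightarrow> 'a::complete_linorder"
  assumes "Limsup F f < L"
  shows "\<exists>c < L. eventually (\<lambda>x. f x \<le> c) F"
proof (cases "\<exists>c. Limsup F f < c \<and> c < L")
  case True
  then obtain c where "Limsup F f < c" "c < L" by blast
  from Limsup_lessD[OF \<open>Limsup F f < c\<close>] have "eventually (\<lambda>x. f x \<le> c) F"
    by (rule eventually_mono) simp
  then show ?thesis using \<open>c < L\<close> by blast
next
  case False
  \<comment> \<open>no value strictly between: \<open>f x < L\<close> already forces \<open>f x \<le> Limsup F f\<close>\<close>
  from Limsup_lessD[OF assms] have "eventually (\<lambda>x. f x \<le> Limsup F f) F"
    by (rule eventually_mono) (use False in \<open>auto simp: not_less[symmetric]\<close>)
  then show ?thesis using assms by blast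
qed

lemma SUP_less_if_limsup_less:
  fixes f :: "nat \<Rightarrow> 'a::complete_linorder"
  assumes "limsup f < L" and "\<And>n. n \<in> A \<Longrightarrow> f n < L"
  shows "(SUP n \<in> A. f n) < L"
proof -
  obtain c N where "c < L" and tail: "\<And>n. n \<ge> N \<Longrightarrow> f n \<le> c"
    using Limsup_less_imp_eventually_le[OF assms(1)] by (auto simp: eventually_sequentially)
  define B where "B = insert c (f ` (A \<inter> {..<N}))"
  have "finite B" by (simp add: B_def)
  have "Max B < L"
    using Max_in[OF \<open>finite B\<close>] \<open>c < L\<close> assms(2) by (auto simp: B_def)
  moreover have "f n \<le> Max B" if "n \<in> A" for n
  proof (cases "n < N")
    case True
    with that show ?thesis using Max_ge[OF \<open>finite B\<close>] by (simp add: B_def)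
  next
    case False
    then have "f n \<le> c" by (simp add: tail)
    also have "c \<le> Max B" using Max_ge[OF \<open>finite B\<close>] by (simp add: B_def)
    finally show ?thesis .
  qed
  ultimately show ?thesis by (meson SUP_least le_less_trans)
qed

theorem mainTheorem17:
  fixes d :: nat and \<rho> \<sigma> :: "complex mat" and \<alpha> :: real
  assumes "density d \<rho>" and "density d \<sigma>"
    and "0 < \<alpha>" and "\<alpha> < 1"
    and "D_test_bar d \<alpha> \<rho> \<sigma> < D_meas_bar d \<alpha> \<rho> \<sigma>"
    and "\<And>n. n \<ge> 1 \<Longrightarrow> D_test (d ^ n) \<alpha> (tpow \<rho> n) (tpow \<sigma> n) / ereal (real n) < D_meas_bar d \<alpha> \<rho> \<sigma>"
  shows "D_test_hat d \<alpha> \<rho> \<sigma> < D_meas_bar d \<alpha> \<rho> \<sigma>"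
  unfolding D_test_hat_def
  by (rule SUP_less_if_limsup_less[OF assms(5)[unfolded D_test_bar_def]]) (simp add: assms(6))

end
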